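(* Let $\mathscr{X}$ be a complex Banach space and $\mathcal{T}\subseteq\mathcal{B}(\mathscr{X})$ a non-empty set of operators. (i) For $\mathcal{A}=\mathrm{Alg}\,\mathrm{Lat}(\mathcal{T})$ we have $\mathrm{Col}(\mathcal{A})\subseteq\mathrm{Col}(\mathcal{A}\cap\mathcal{A}')$. (ii) If $\mathcal{T}'$ and $\mathcal{T}''$ are reflexive algebras, then $\mathrm{Col}(\mathcal{T}')=\mathrm{Col}(\mathcal{T}'')$.
   Context: $\mathcal{T}'$ is the commutant of $\mathcal{T}$ (operators commuting with all elements of $\mathcal{T}$) and $\mathcal{T}''=(\mathcal{T}')'$. $\mathrm{Lat}(\mathcal{T})$ is the set of closed subspaces invariant for all operators in $\mathcal{T}$; $\mathrm{Alg}(\mathfrak{F})$ is the set of operators leaving every subspace in $\mathfrak{F}$ invariant. A subalgebra $\mathcal{A}$ is reflexive if $\mathrm{Alg}\,\mathrm{Lat}(\mathcal{A})=\mathcal{A}$. For a set $\mathcal{S}$ of operators, $\mathrm{Col}(\mathcal{S})$ is the group of invertible $S\in\mathcal{B}(\mathscr{X})$ such that for every closed subspace $\mathscr{M}$: $\mathscr{M}\in\mathrm{Lat}(\mathcal{S})$ iff $S\mathscr{M}\in\mathrm{Lat}(\mathcal{S})$. *)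

theory Defs
  imports "HOL-Analysis.Analysis"
begin

class complex_banach = banach +
  fixes scaleC :: "complex \<Rightarrow> 'a \<Rightarrow> 'a"
  assumes scaleC_add_right: "scaleC c (x + y) = scaleC c x + scaleC c y"
    and scaleC_add_left: "scaleC (c + d) x = scaleC c x + scaleC d x"
    and scaleC_scaleC: "scaleC c (scaleC d x) = scaleC (c * d) x"
    and scaleC_one: "scaleC 1 x = x"
    and scaleC_of_real: "scaleC (complex_of_real r) x = scaleR r x"
    and norm_scaleC: "norm (scaleC c x) = cmod c * norm x"

definition BX :: "('a::complex_banach \<Rightarrow> 'a) set" where
  "BX = {T. bounded_linear T \<and> (\<forall>c x. T (scaleC c x) = scaleC c (T x))}"

definition closed_subspace :: "'a::complex_banach set \<Rightarrow> bool" where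
  "closed_subspace M \<longleftrightarrow> closed M \<and> 0 \<in> M \<and> (\<forall>x\<in>M. \<forall>y\<in>M. x + y \<in> M)
     \<and> (\<forall>c. \<forall>x\<in>M. scaleC c x \<in> M)"

definition Lat :: "('a::complex_banach \<Rightarrow> 'a) set \<Rightarrow> 'a set set" where
  "Lat \<T> = {M. closed_subspace M \<and> (\<forall>T\<in>\<T>. T ` M \<subseteq> M)}"

definition Alg :: "'a::complex_banach set set \<Rightarrow> ('a \<Rightarrow> 'a) set" where
  "Alg \<F> = {T \<in> BX. \<forall>M\<in>\<F>. T ` M \<subseteq> M}"

definition commutant :: "('a::complex_banach \<Rightarrow> 'a) set \<Rightarrow> ('a \<Rightarrow> 'a) set" where
  "commutant \<T> = {A \<in> BX. \<forall>T\<in>\<T>. A \<circ> T = T \<circ> A}"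

definition subalgebra :: "('a::complex_banach \<Rightarrow> 'a) set \<Rightarrow> bool" where
  "subalgebra \<A> \<longleftrightarrow> \<A> \<subseteq> BX \<and> (\<lambda>x. 0) \<in> \<A>
     \<and> (\<forall>S\<in>\<A>. \<forall>T\<in>\<A>. (\<lambda>x. S x + T x) \<in> \<A> \<and> S \<circ> T \<in> \<A>)
     \<and> (\<forall>c. \<forall>T\<in>\<A>. (\<lambda>x. scaleC c (T x)) \<in> \<A>)"

definition reflexive_algebra :: "('a::complex_banach \<Rightarrow> 'a) set \<Rightarrow> bool" where
  "reflexive_algebra \<A> \<longleftrightarrow> subalgebra \<A> \<and> Alg (Lat \<A>) = \<A>"

definition invertible_op :: "('a::complex_banach \<Rightarrow> 'a) \<Rightarrow> bool" where
  "invertible_op S \<longleftrightarrow> S \<in> BX \<and> (\<exists>R\<in>BX. S \<circ> R = id \<and> R \<circ> S = id)"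

definition Col :: "('a::complex_banach \<Rightarrow> 'a) set \<Rightarrow> ('a \<Rightarrow> 'a) set" where
  "Col \<S> = {S. invertible_op S \<and>
     (\<forall>M. closed_subspace M \<longrightarrow> (M \<in> Lat \<S> \<longleftrightarrow> S ` M \<in> Lat \<S>))}"

end

theory Submission
  imports Defs
begin

text \<open>For an invertible \<open>S\<close>, the subspace \<open>S ` M\<close> is invariant under \<open>X\<close> exactly when \<open>M\<close> is
  invariant under \<open>S\<^sup>-\<^sup>1 X S\<close>. Hence, for a reflexive \<open>\<A>\<close>, \<open>S \<in> Col \<A>\<close> holds precisely when
  conjugation by \<open>S\<close> maps \<open>\<A>\<close> onto itself. Such conjugation invariance passes to commutants and
  to intersections, which gives (i) since \<open>Alg (Lat \<T>)\<close> is reflexive, and (ii) since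
  \<open>\<T>''' = \<T>'\<close>.\<close>

lemma BX_comp: "S \<in> BX \<Longrightarrow> T \<in> BX \<Longrightarrow> S \<circ> T \<in> BX"
  unfolding BX_def o_def by (auto intro: bounded_linear_compose)

lemma closed_subspace_vimage:
  assumes S: "S \<in> BX" and M: "closed_subspace M"
  shows "closed_subspace (S -` M)"
proof -
  have "bounded_linear S" and scaleC: "\<And>c x. S (scaleC c x) = scaleC c (S x)"
    using S unfolding BX_def by auto
  then have "linear S" and "\<And>x. continuous (at x) S"
    by (simp_all add: bounded_linear.linear linear_continuous_at)
  then show ?thesis
    using M scaleC unfolding closed_subspace_def
    by (auto intro: continuous_closed_vimage simp: linear_0 linear_add)
qed

lemma invertible_opD:
  assumes "invertible_op S"
  shows "S \<in> BX" "inv S \<in> BX" "bij S"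
proof -
  obtain R where "S \<in> BX" "R \<in> BX" "S \<circ> R = id" "R \<circ> S = id"
    using assms unfolding invertible_op_def by auto
  then show "S \<in> BX" "inv S \<in> BX" "bij S"
    by (simp_all add: inv_unique_comp o_bij)
qed

lemma invertible_op_inv: "invertible_op S \<Longrightarrow> invertible_op (inv S)"
  using invertible_opD[of S] unfolding invertible_op_def
  by (metis bij_is_inj bij_is_surj inv_o_cancel surj_iff)

lemma closed_subspace_image:
  assumes "invertible_op S" and "closed_subspace M"
  shows "closed_subspace (S ` M)"
proof -
  have "S ` M = inv S -` M"
    using invertible_opD(3)[OF assms(1)]
    by (simp add: bij_vimage_eq_inv_image bij_imp_bij_inv inv_inv_eq)
  then show ?thesis
    using assms invertible_opD(2) closed_subspace_vimage by metis
qed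

lemma image_invariant_iff_conj:
  assumes "bij S"
  shows "X ` S ` M \<subseteq> S ` M \<longleftrightarrow> (inv S \<circ> X \<circ> S) ` M \<subseteq> M"
proof -
  have "X ` S ` M \<subseteq> S ` M \<longleftrightarrow> inv S ` X ` S ` M \<subseteq> inv S ` S ` M"
    using bij_imp_bij_inv[OF assms] by (simp add: bij_is_inj inj_image_subset_iff)
  also have "inv S ` S ` M = M"
    using assms by (simp add: image_comp bij_is_inj)
  finally show ?thesis by (simp add: image_comp)
qed

lemma Lat_image_iff:
  assumes "invertible_op S" and "closed_subspace M"
  shows "S ` M \<in> Lat \<U> \<longleftrightarrow> (\<forall>X\<in>\<U>. (inv S \<circ> X \<circ> S) ` M \<subseteq> M)"
proof -
  have "S ` M \<in> Lat \<U> \<longleftrightarrow> (\<forall>X\<in>\<U>. X ` S ` M \<subseteq> S ` M)"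
    unfolding Lat_def by (simp add: closed_subspace_image assms)
  then show ?thesis
    using image_invariant_iff_conj[OF invertible_opD(3)[OF assms(1)]] by blast
qed

definition similarity_invariant :: "('a::complex_banach \<Rightarrow> 'a) set \<Rightarrow> ('a \<Rightarrow> 'a) \<Rightarrow> bool" where
  "similarity_invariant \<U> S \<longleftrightarrow> (\<forall>X\<in>\<U>. inv S \<circ> X \<circ> S \<in> \<U> \<and> S \<circ> X \<circ> inv S \<in> \<U>)"

lemma similarity_invariant_Int:
  "similarity_invariant \<U> S \<Longrightarrow> similarity_invariant \<V> S \<Longrightarrow> similarity_invariant (\<U> \<inter> \<V>) S"
  unfolding similarity_invariant_def by auto

lemma conj_mem_commutant:
  assumes S: "invertible_op S" and Y: "Y \<in> commutant \<A>"
    and conj: "\<And>X. X \<in> \<A> \<Longrightarrow> S \<circ> X \<circ> inv S \<in> \<A>"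
  shows "inv S \<circ> Y \<circ> S \<in> commutant \<A>"
  unfolding commutant_def
proof (intro CollectI conjI ballI)
  show "inv S \<circ> Y \<circ> S \<in> BX"
    using Y invertible_opD[OF S] by (auto simp: commutant_def intro!: BX_comp)
  have SS: "inv S (S x) = x" "S (inv S x) = x" for x
    using invertible_opD(3)[OF S] by (simp_all add: bij_is_inj bij_is_surj surj_f_inv_f)
  fix X assume "X \<in> \<A>"
  then have "Y \<circ> (S \<circ> X \<circ> inv S) = (S \<circ> X \<circ> inv S) \<circ> Y"
    using Y conj unfolding commutant_def by blast
  then have "Y (S (X (inv S z))) = S (X (inv S (Y z)))" for z
    by (metis comp_apply)
  then have "Y (S (X x)) = S (X (inv S (Y (S x))))" for x
    using SS(1) by metis
  then show "inv S \<circ> Y \<circ> S \<circ> X = X \<circ> (inv S \<circ> Y \<circ> S)"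
    by (simp add: fun_eq_iff SS)
qed

lemma similarity_invariant_commutant:
  assumes "invertible_op S" and "similarity_invariant \<A> S"
  shows "similarity_invariant (commutant \<A>) S"
proof -
  have "inv (inv S) = S"
    using invertible_opD(3)[OF assms(1)] by (rule inv_inv_eq)
  then show ?thesis
    using assms conj_mem_commutant[of S] conj_mem_commutant[of "inv S"] invertible_op_inv
    unfolding similarity_invariant_def by metis
qed

lemma similarity_invariant_imp_Col:
  assumes S: "invertible_op S" and sim: "similarity_invariant \<U> S"
  shows "S \<in> Col \<U>"
  unfolding Col_def
proof (intro CollectI conjI allI impI S)
  fix M :: "'a set" assume M: "closed_subspace M"
  have "inv S \<circ> (S \<circ> X \<circ> inv S) \<circ> S = X" for X
    using invertible_opD(3)[OF S] by (simp add: fun_eq_iff bij_is_inj bij_is_surj surj_f_inv_f)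
  then have "(\<forall>X\<in>\<U>. (inv S \<circ> X \<circ> S) ` M \<subseteq> M) \<longleftrightarrow> (\<forall>X\<in>\<U>. X ` M \<subseteq> M)"
    using sim unfolding similarity_invariant_def by metis
  then show "M \<in> Lat \<U> \<longleftrightarrow> S ` M \<in> Lat \<U>"
    using Lat_image_iff[OF S M] M unfolding Lat_def by auto
qed

lemma Col_imp_similarity_invariant:
  assumes refl: "Alg (Lat \<A>) = \<A>" and col: "S \<in> Col \<A>"
  shows "similarity_invariant \<A> S"
  unfolding similarity_invariant_def
proof (intro ballI conjI)
  have S: "invertible_op S" and S': "invertible_op (inv S)"
    and colM: "\<And>M. closed_subspace M \<Longrightarrow> M \<in> Lat \<A> \<longleftrightarrow> S ` M \<in> Lat \<A>"
    using col invertible_op_inv unfolding Col_def by auto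
  have "\<A> \<subseteq> BX" using refl unfolding Alg_def by auto
  fix X assume X: "X \<in> \<A>"
  then have XBX: "X \<in> BX" and XLat: "\<And>M. M \<in> Lat \<A> \<Longrightarrow> X ` M \<subseteq> M"
    using \<open>\<A> \<subseteq> BX\<close> unfolding Lat_def by auto
  have "(inv S \<circ> X \<circ> S) ` M \<subseteq> M" if M: "M \<in> Lat \<A>" for M
  proof -
    have "closed_subspace M" using M unfolding Lat_def by auto
    then show ?thesis
      using M X colM Lat_image_iff[OF S] by blast
  qed
  then have "inv S \<circ> X \<circ> S \<in> Alg (Lat \<A>)"
    using XBX invertible_opD[OF S] unfolding Alg_def by (auto intro!: BX_comp)
  then show "inv S \<circ> X \<circ> S \<in> \<A>" using refl by simp
  have "(S \<circ> X \<circ> inv S) ` M \<subseteq> M" if M: "M \<in> Lat \<A>" for M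
  proof -
    have "closed_subspace M" using M unfolding Lat_def by auto
    then have N: "closed_subspace (inv S ` M)" using S' closed_subspace_image by blast
    have "S ` inv S ` M = M"
      using invertible_opD(3)[OF S] by (simp add: image_comp bij_is_surj surj_f_inv_f)
    then have "inv S ` M \<in> Lat \<A>" using colM[OF N] M by simp
    then have "X ` inv S ` M \<subseteq> inv S ` M" by (rule XLat)
    then show ?thesis
      using image_invariant_iff_conj[OF invertible_opD(3)[OF S']]
        inv_inv_eq[OF invertible_opD(3)[OF S]] by simp
  qed
  then have "S \<circ> X \<circ> inv S \<in> Alg (Lat \<A>)"
    using XBX invertible_opD[OF S] unfolding Alg_def by (auto intro!: BX_comp)
  then show "S \<circ> X \<circ> inv S \<in> \<A>" using refl by simp
qed

lemma Col_reflexive_iff: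
  assumes "Alg (Lat \<A>) = \<A>"
  shows "S \<in> Col \<A> \<longleftrightarrow> invertible_op S \<and> similarity_invariant \<A> S"
  using assms Col_imp_similarity_invariant similarity_invariant_imp_Col
  unfolding Col_def by blast

lemma Col_subset_Col_commutant:
  assumes "Alg (Lat \<A>) = \<A>"
  shows "Col \<A> \<subseteq> Col (commutant \<A>)"
  using Col_reflexive_iff[OF assms] similarity_invariant_commutant similarity_invariant_imp_Col
  by blast

lemma Col_subset_Col_Int_commutant:
  assumes "Alg (Lat \<A>) = \<A>"
  shows "Col \<A> \<subseteq> Col (\<A> \<inter> commutant \<A>)"
  using Col_reflexive_iff[OF assms] similarity_invariant_commutant similarity_invariant_Int
    similarity_invariant_imp_Col
  by blast

lemma Alg_Lat_Alg_Lat: "Alg (Lat (Alg (Lat \<T>))) = Alg (Lat \<T>)"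
proof -
  have "Lat \<T> \<subseteq> Lat (Alg (Lat \<T>))" unfolding Lat_def Alg_def by auto
  then show ?thesis unfolding Alg_def Lat_def by blast
qed

lemma commutant_antimono: "\<U> \<subseteq> \<V> \<Longrightarrow> commutant \<V> \<subseteq> commutant \<U>"
  unfolding commutant_def by auto

lemma subset_commutant_commutant: "\<U> \<subseteq> BX \<Longrightarrow> \<U> \<subseteq> commutant (commutant \<U>)"
  unfolding commutant_def by auto

lemma commutant_subset_BX: "commutant \<U> \<subseteq> BX"
  unfolding commutant_def by auto

lemma commutant_commutant_commutant:
  assumes "\<T> \<subseteq> BX"
  shows "commutant (commutant (commutant \<T>)) = commutant \<T>"
proof
  show "commutant (commutant (commutant \<T>)) \<subseteq> commutant \<T>"
    using assms by (intro commutant_antimono subset_commutant_commutant)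
  show "commutant \<T> \<subseteq> commutant (commutant (commutant \<T>))"
    using commutant_subset_BX by (rule subset_commutant_commutant)
qed

theorem corollary3p11:
  fixes \<T> :: "('a::complex_banach \<Rightarrow> 'a) set"
  assumes "\<T> \<subseteq> BX" and "\<T> \<noteq> {}"
  shows "Col (Alg (Lat \<T>)) \<subseteq> Col (Alg (Lat \<T>) \<inter> commutant (Alg (Lat \<T>)))
    \<and> (reflexive_algebra (commutant \<T>) \<and> reflexive_algebra (commutant (commutant \<T>))
           \<longrightarrow> Col (commutant \<T>) = Col (commutant (commutant \<T>)))"
proof (intro conjI impI)
  show "Col (Alg (Lat \<T>)) \<subseteq> Col (Alg (Lat \<T>) \<inter> commutant (Alg (Lat \<T>)))"
    using Alg_Lat_Alg_Lat by (rule Col_subset_Col_Int_commutant)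
next
  assume "reflexive_algebra (commutant \<T>) \<and> reflexive_algebra (commutant (commutant \<T>))"
  then have "Col (commutant \<T>) \<subseteq> Col (commutant (commutant \<T>))"
    and "Col (commutant (commutant \<T>)) \<subseteq> Col (commutant (commutant (commutant \<T>)))"
    unfolding reflexive_algebra_def by (simp_all add: Col_subset_Col_commutant)
  then show "Col (commutant \<T>) = Col (commutant (commutant \<T>))"
    using commutant_commutant_commutant[OF assms(1)] by simp
qed

end
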